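(* Let $m\geq1$ and, for $s\geq2$, set $G(m,s)=sm-\operatorname{zcl}_s(\mathbb{R}\mathrm{P}^m)$. Then $G(m,2)\geq G(m,3)\geq G(m,4)\geq\cdots\geq0$.
   Context: With mod $2$ cohomology, the $s$-th zero-divisors of $\mathbb{R}\mathrm{P}^m$ are the elements of the kernel of $\Delta_s^*\colon H^*((\mathbb{R}\mathrm{P}^m)^{\times s};\mathbb{Z}_2)\to H^*(\mathbb{R}\mathrm{P}^m;\mathbb{Z}_2)$ induced by the diagonal; $\operatorname{zcl}_s(\mathbb{R}\mathrm{P}^m)$ is the maximal number of $s$-th zero-divisors with nonzero product. *)

theory Defs
  imports Main
begin

text \<open>Mod 2 cohomology of (RP^m)^s, modelled via Kuenneth as the truncated
polynomial algebra Z2[x_0,...,x_(s-1)]/(x_i^(m+1)).  A monomial is an exponent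
vector e :: nat => nat with e i <= m for i < s and e i = 0 for i >= s.
An element of the algebra (Z2 coefficients) is the finite set of monomials
occurring in it; addition is symmetric difference.\<close>

definition tmonos :: "nat \<Rightarrow> nat \<Rightarrow> (nat \<Rightarrow> nat) set" where
  "tmonos s m = {e. (\<forall>i<s. e i \<le> m) \<and> (\<forall>i\<ge>s. e i = 0)}"

definition tmul :: "nat \<Rightarrow> nat \<Rightarrow> (nat \<Rightarrow> nat) set \<Rightarrow> (nat \<Rightarrow> nat) set \<Rightarrow> (nat \<Rightarrow> nat) set" where
  "tmul s m P Q = {g \<in> tmonos s m.
      odd (card {(e, f). e \<in> P \<and> f \<in> Q \<and> (\<lambda>i. e i + f i) = g})}"

definition tone :: "(nat \<Rightarrow> nat) set" where
  "tone = {\<lambda>_. 0}"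

definition tprod :: "nat \<Rightarrow> nat \<Rightarrow> (nat \<Rightarrow> nat) set list \<Rightarrow> (nat \<Rightarrow> nat) set" where
  "tprod s m zs = foldr (tmul s m) zs tone"

text \<open>The diagonal map Delta_s^*: x_i maps to x in Z2[x]/(x^(m+1)); the image is
given as the set of degrees k <= m whose coefficient of x^k is 1.\<close>

definition diag :: "nat \<Rightarrow> nat \<Rightarrow> (nat \<Rightarrow> nat) set \<Rightarrow> nat set" where
  "diag s m P = {k. k \<le> m \<and> odd (card {e \<in> P. (\<Sum>i<s. e i) = k})}"

definition zero_div :: "nat \<Rightarrow> nat \<Rightarrow> (nat \<Rightarrow> nat) set \<Rightarrow> bool" where
  "zero_div s m P \<longleftrightarrow> P \<subseteq> tmonos s m \<and> diag s m P = {}"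

definition zcl :: "nat \<Rightarrow> nat \<Rightarrow> nat" where
  "zcl s m = (GREATEST k. \<exists>zs. length zs = k \<and> (\<forall>z\<in>set zs. zero_div s m z)
                               \<and> tprod s m zs \<noteq> {})"

definition G :: "nat \<Rightarrow> nat \<Rightarrow> int" where
  "G m s = int (s * m) - int (zcl s m)"

end

theory Submission
  imports Defs
begin

text \<open>Every monomial of an s-th zero-divisor has positive degree, so a nonzero product of
k zero-divisors contains a monomial of degree at least k; since the top degree of
(RP^m)^s is sm, this gives zcl_s \<le> sm. Conversely, a nonzero product of s-th zero-divisors
is still a nonzero product of (s+1)-th zero-divisors, and none of its monomials involves
x_s. Multiplying it by (x_0 + x_s)^m keeps it nonzero: a monomial g of the product reappears
as g x_s^m, which arises in exactly one way, namely as x_s^m times g. Hence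
zcl_(s+1) \<ge> zcl_s + m.\<close>

lemma tmulE:
  assumes "h \<in> tmul s m P Q"
  obtains e f where "e \<in> P" "f \<in> Q" "h = (\<lambda>i. e i + f i)" "h \<in> tmonos s m"
proof -
  have "odd (card {(e, f). e \<in> P \<and> f \<in> Q \<and> (\<lambda>i. e i + f i) = h})" and "h \<in> tmonos s m"
    using assms by (auto simp: tmul_def)
  then have "{(e, f). e \<in> P \<and> f \<in> Q \<and> (\<lambda>i. e i + f i) = h} \<noteq> {}"
    by (metis card.empty even_zero)
  then show thesis
    using that \<open>h \<in> tmonos s m\<close> by auto
qed

lemma tprod_subset_tmonos: "tprod s m zs \<subseteq> tmonos s m"
  by (cases zs) (auto simp: tprod_def tone_def tmonos_def tmul_def)

lemma tmonos_subset_Suc: "tmonos s m \<subseteq> tmonos (Suc s) m"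
  by (auto simp: tmonos_def less_Suc_eq)

lemma tmul_Suc:
  assumes "P \<subseteq> tmonos s m" and "Q \<subseteq> tmonos s m"
  shows "tmul (Suc s) m P Q = tmul s m P Q"
proof
  show "tmul s m P Q \<subseteq> tmul (Suc s) m P Q"
    using tmonos_subset_Suc by (auto simp: tmul_def)
next
  show "tmul (Suc s) m P Q \<subseteq> tmul s m P Q"
  proof
    fix h assume h: "h \<in> tmul (Suc s) m P Q"
    then obtain e f where "e \<in> P" "f \<in> Q" "h = (\<lambda>i. e i + f i)" "h \<in> tmonos (Suc s) m"
      by (rule tmulE)
    with assms have "h \<in> tmonos s m"
      by (auto simp: tmonos_def)
    with h show "h \<in> tmul s m P Q"
      by (simp add: tmul_def)
  qed
qed

lemma tprod_Suc:
  assumes "\<forall>z\<in>set zs. z \<subseteq> tmonos s m"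
  shows "tprod (Suc s) m zs = tprod s m zs"
  using assms
proof (induction zs)
  case Nil
  then show ?case by (simp add: tprod_def)
next
  case (Cons z zs)
  then show ?case
    using tmul_Suc[of z s m "tprod s m zs"] tprod_subset_tmonos[of s m zs]
    by (simp add: tprod_def)
qed

lemma zero_div_Suc:
  assumes "zero_div s m z"
  shows "zero_div (Suc s) m z"
proof -
  have sub: "z \<subseteq> tmonos s m" and diag: "diag s m z = {}"
    using assms by (auto simp: zero_div_def)
  have "{e \<in> z. (\<Sum>i<Suc s. e i) = k} = {e \<in> z. (\<Sum>i<s. e i) = k}" for k
    using sub by (auto simp: tmonos_def)
  then have "diag (Suc s) m z = diag s m z"
    by (simp add: diag_def)
  moreover have "z \<subseteq> tmonos (Suc s) m"
    using sub tmonos_subset_Suc by blast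
  ultimately show ?thesis
    using diag by (simp add: zero_div_def)
qed

definition deg :: "nat \<Rightarrow> (nat \<Rightarrow> nat) \<Rightarrow> nat" where
  "deg s e = (\<Sum>i<s. e i)"

lemma deg_add: "deg s (\<lambda>i. e i + f i) = deg s e + deg s f"
  by (simp add: deg_def sum.distrib)

lemma deg_le_mult:
  assumes "e \<in> tmonos s m"
  shows "deg s e \<le> s * m"
proof -
  have "(\<Sum>i<s. e i) \<le> (\<Sum>i<s. m)"
    using assms by (intro sum_mono) (auto simp: tmonos_def)
  then show ?thesis by (simp add: deg_def)
qed

lemma tmonos_deg_eq_0_iff:
  assumes "e \<in> tmonos s m"
  shows "deg s e = 0 \<longleftrightarrow> e = (\<lambda>_. 0)"
proof
  assume "deg s e = 0"
  show "e = (\<lambda>_. 0)"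
  proof
    fix i
    show "e i = 0"
      using assms \<open>deg s e = 0\<close> by (cases "i < s") (auto simp: deg_def tmonos_def)
  qed
qed (simp add: deg_def)

lemma zero_div_deg_pos:
  assumes "zero_div s m z" and "e \<in> z"
  shows "0 < deg s e"
proof (rule ccontr)
  assume "\<not> 0 < deg s e"
  have sub: "z \<subseteq> tmonos s m" and diag: "diag s m z = {}"
    using assms(1) by (auto simp: zero_div_def)
  have zero: "x = (\<lambda>_. 0)" if "x \<in> z" and "deg s x = 0" for x
    using tmonos_deg_eq_0_iff[of x s m] that sub by auto
  moreover have "e = (\<lambda>_. 0)"
    using zero assms(2) \<open>\<not> 0 < deg s e\<close> by simp
  ultimately have "{x \<in> z. deg s x = 0} = {\<lambda>_. 0}"
    using assms(2) \<open>\<not> 0 < deg s e\<close> by auto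
  then have "0 \<in> diag s m z"
    by (simp add: diag_def deg_def[symmetric])
  with diag show False
    by simp
qed

lemma length_le_deg_tprod:
  assumes "\<forall>z\<in>set zs. zero_div s m z" and "h \<in> tprod s m zs"
  shows "length zs \<le> deg s h"
  using assms
proof (induction zs arbitrary: h)
  case Nil
  then show ?case by simp
next
  case (Cons z zs)
  from \<open>h \<in> tprod s m (z # zs)\<close> obtain e f
    where "e \<in> z" "f \<in> tprod s m zs" "h = (\<lambda>i. e i + f i)"
    by (auto simp: tprod_def elim: tmulE)
  moreover have "0 < deg s e"
    using Cons.prems(1) \<open>e \<in> z\<close> by (intro zero_div_deg_pos[of s m z]) simp_all
  moreover from Cons \<open>f \<in> tprod s m zs\<close> have "length zs \<le> deg s f"
    by simp
  ultimately show ?case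
    by (simp add: deg_add)
qed

definition nonzero_zd_product :: "nat \<Rightarrow> nat \<Rightarrow> nat \<Rightarrow> bool" where
  "nonzero_zd_product s m k \<longleftrightarrow>
     (\<exists>zs. length zs = k \<and> (\<forall>z\<in>set zs. zero_div s m z) \<and> tprod s m zs \<noteq> {})"

lemma nonzero_zd_product_le_mult:
  assumes "nonzero_zd_product s m k"
  shows "k \<le> s * m"
proof -
  obtain zs h where "length zs = k" "\<forall>z\<in>set zs. zero_div s m z" "h \<in> tprod s m zs"
    using assms by (auto simp: nonzero_zd_product_def)
  then have "k \<le> deg s h"
    using length_le_deg_tprod by blast
  also have "deg s h \<le> s * m"
    using \<open>h \<in> tprod s m zs\<close> tprod_subset_tmonos by (intro deg_le_mult) blast
  finally show ?thesis .
qed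

lemma zcl_eq_Greatest: "zcl s m = Greatest (nonzero_zd_product s m)"
  by (simp add: zcl_def nonzero_zd_product_def[abs_def])

lemma nonzero_zd_product_zcl: "nonzero_zd_product s m (zcl s m)"
proof -
  have "nonzero_zd_product s m 0"
    by (auto simp: nonzero_zd_product_def tprod_def tone_def)
  then show ?thesis
    unfolding zcl_eq_Greatest using nonzero_zd_product_le_mult by (rule GreatestI_nat)
qed

lemma le_zcl: "nonzero_zd_product s m k \<Longrightarrow> k \<le> zcl s m"
  unfolding zcl_eq_Greatest
  by (rule Greatest_le_nat[where b = "s * m"]) (use nonzero_zd_product_le_mult in blast)+

lemma zcl_le_mult: "zcl s m \<le> s * m"
  using nonzero_zd_product_le_mult nonzero_zd_product_zcl by blast

definition xgen :: "nat \<Rightarrow> nat \<Rightarrow> nat" where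
  "xgen j = (\<lambda>i. if i = j then 1 else 0)"

definition xsum :: "nat \<Rightarrow> nat \<Rightarrow> (nat \<Rightarrow> nat) set" where
  "xsum i j = {xgen i, xgen j}"

lemma zero_div_xsum:
  assumes "i \<noteq> j" "i < s" "j < s" "1 \<le> m"
  shows "zero_div s m (xsum i j)"
proof -
  have deg1: "deg s e = 1" if "e \<in> xsum i j" for e
    using that assms by (auto simp: xsum_def xgen_def deg_def)
  have "xgen i \<noteq> xgen j"
    using assms(1) by (auto simp: xgen_def fun_eq_iff)
  then have "card (xsum i j) = 2"
    by (simp add: xsum_def)
  moreover have "{e \<in> xsum i j. deg s e = k} = (if k = 1 then xsum i j else {})" for k
    using deg1 by auto
  ultimately have "even (card {e \<in> xsum i j. deg s e = k})" for k
    by simp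
  then have "diag s m (xsum i j) = {}"
    by (simp add: diag_def deg_def[symmetric])
  moreover have "xsum i j \<subseteq> tmonos s m"
    using assms by (auto simp: xsum_def xgen_def tmonos_def)
  ultimately show ?thesis
    by (simp add: zero_div_def)
qed

lemma tmul_xsum_le:
  assumes "\<forall>f\<in>Q. f j \<le> n" and "h \<in> tmul s m (xsum i j) Q"
  shows "h j \<le> Suc n"
proof -
  obtain e f where "e \<in> xsum i j" "f \<in> Q" "h = (\<lambda>k. e k + f k)"
    using assms(2) by (rule tmulE)
  moreover from \<open>e \<in> xsum i j\<close> have "e j \<le> 1"
    by (auto simp: xsum_def xgen_def)
  ultimately show ?thesis
    using assms(1) by fastforce
qed

lemma tmul_xsum_mem:
  assumes "i \<noteq> j" and "\<forall>f\<in>Q. f j \<le> n" and "g \<in> Q" "g j = n"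
    and "g(j := Suc n) \<in> tmonos s m"
  shows "g(j := Suc n) \<in> tmul s m (xsum i j) Q"
proof -
  \<comment> \<open>The exponent Suc n of x_j exceeds that of every f in Q, so the factor from xsum i j is x_j.\<close>
  have "{(e, f). e \<in> xsum i j \<and> f \<in> Q \<and> (\<lambda>k. e k + f k) = g(j := Suc n)} = {(xgen j, g)}"
  proof (intro equalityI subsetI)
    fix p assume "p \<in> {(e, f). e \<in> xsum i j \<and> f \<in> Q \<and> (\<lambda>k. e k + f k) = g(j := Suc n)}"
    then obtain e f where p: "p = (e, f)" and e: "e \<in> xsum i j" and f: "f \<in> Q"
      and sum: "(\<lambda>k. e k + f k) = g(j := Suc n)"
      by blast
    from sum have ej: "e j + f j = Suc n"
      by (metis fun_upd_same)
    moreover from assms(2) f have "f j \<le> n"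
      by blast
    ultimately have "e j \<noteq> 0"
      by simp
    with e assms(1) have "e = xgen j"
      by (auto simp: xsum_def xgen_def)
    moreover have "f k = g k" for k
      using fun_cong[OF sum, of k] \<open>e = xgen j\<close> ej assms(4)
      by (cases "k = j") (auto simp: xgen_def)
    ultimately show "p \<in> {(xgen j, g)}"
      using p by auto
  next
    fix p assume "p \<in> {(xgen j, g)}"
    with assms(3,4) show "p \<in> {(e, f). e \<in> xsum i j \<and> f \<in> Q \<and> (\<lambda>k. e k + f k) = g(j := Suc n)}"
      by (auto simp: xsum_def xgen_def fun_eq_iff)
  qed
  with assms(5) show ?thesis
    by (simp add: tmul_def)
qed

lemma xsum_power_mem:
  assumes "i \<noteq> j" "j < s" "n \<le> m"
    and "\<forall>f\<in>Q. f j = 0" and "g \<in> Q" "g \<in> tmonos s m"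
  shows "g(j := n) \<in> foldr (tmul s m) (replicate n (xsum i j)) Q"
proof -
  have "(\<forall>f\<in>foldr (tmul s m) (replicate n (xsum i j)) Q. f j \<le> n)
        \<and> g(j := n) \<in> foldr (tmul s m) (replicate n (xsum i j)) Q"
    using \<open>n \<le> m\<close>
  proof (induction n)
    case 0
    with assms(4,5) show ?case
      by (simp add: fun_upd_idem)
  next
    case (Suc n)
    define F where "F = foldr (tmul s m) (replicate n (xsum i j)) Q"
    have "(\<forall>f\<in>F. f j \<le> n) \<and> g(j := n) \<in> F"
      unfolding F_def using Suc.prems by (intro Suc.IH) simp
    then have le: "\<forall>f\<in>F. f j \<le> n" and mem: "g(j := n) \<in> F"
      by blast+
    have "g(j := Suc n) \<in> tmonos s m"
      using assms(2,6) Suc.prems by (auto simp: tmonos_def)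
    then have "g(j := Suc n) \<in> tmul s m (xsum i j) F"
      by (rule tmul_xsum_mem[OF assms(1) le mem fun_upd_same, unfolded fun_upd_upd])
    with tmul_xsum_le[OF le] show ?case
      unfolding replicate_Suc foldr_Cons comp_apply F_def[symmetric] by blast
  qed
  then show ?thesis ..
qed

lemma zcl_Suc_ge:
  assumes "1 \<le> s" "1 \<le> m"
  shows "zcl s m + m \<le> zcl (Suc s) m"
proof -
  obtain zs g where zs: "length zs = zcl s m" "\<forall>z\<in>set zs. zero_div s m z"
    and g: "g \<in> tprod s m zs"
    using nonzero_zd_product_zcl[of s m] by (auto simp: nonzero_zd_product_def)
  define Q where "Q = tprod (Suc s) m zs"
  have Q: "Q = tprod s m zs"
    unfolding Q_def using zs(2) by (intro tprod_Suc) (auto simp: zero_div_def)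
  then have sub: "Q \<subseteq> tmonos s m"
    by (simp add: tprod_subset_tmonos)
  have no_xs: "\<forall>f\<in>Q. f s = 0"
  proof
    fix f assume "f \<in> Q"
    with sub show "f s = 0"
      by (auto simp: tmonos_def)
  qed
  have gQ: "g \<in> Q"
    using g Q by simp
  with sub have gT: "g \<in> tmonos (Suc s) m"
    using tmonos_subset_Suc by blast
  define ws where "ws = replicate m (xsum 0 s) @ zs"
  have "g(s := m) \<in> foldr (tmul (Suc s) m) (replicate m (xsum 0 s)) Q"
    using assms no_xs gQ gT xsum_power_mem[where i = 0 and j = s and s = "Suc s" and n = m]
    by simp
  moreover have "tprod (Suc s) m ws = foldr (tmul (Suc s) m) (replicate m (xsum 0 s)) Q"
    by (simp add: ws_def tprod_def Q_def)
  ultimately have nonzero: "tprod (Suc s) m ws \<noteq> {}"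
    by auto
  have "zero_div (Suc s) m (xsum 0 s)"
    by (rule zero_div_xsum) (use assms in auto)
  with zs(2) have "\<forall>z\<in>set ws. zero_div (Suc s) m z"
    by (auto simp: ws_def zero_div_Suc)
  with nonzero have "nonzero_zd_product (Suc s) m (length ws)"
    unfolding nonzero_zd_product_def by blast
  then show ?thesis
    using le_zcl by (simp add: ws_def zs(1) add.commute)
qed

theorem lemma4p3:
  fixes m :: nat
  assumes "m \<ge> 1"
  shows "\<forall>s\<ge>2. G m (Suc s) \<le> G m s \<and> 0 \<le> G m s"
proof (intro allI impI conjI)
  fix s :: nat assume "s \<ge> 2"
  then have "zcl s m + m \<le> zcl (Suc s) m"
    using assms by (intro zcl_Suc_ge) auto
  then show "G m (Suc s) \<le> G m s"
    by (simp add: G_def)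
  have "int (zcl s m) \<le> int (s * m)"
    by (simp only: of_nat_le_iff zcl_le_mult)
  then show "0 \<le> G m s"
    unfolding G_def by linarith
qed

end
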